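(* Let $F(s)=-\sum_{j=1}^\infty j\ln(1-e^{sj})$ for $s<0$. Then for every integer $m\ge0$, $$F^{(m)}(-s)\sim\zeta(3)\,\Gamma(m+2)\,\frac{1}{s^{m+2}},\quad\text{as } s\downarrow0.$$
   Context: $F$ is the fulcrum $s\mapsto\ln M(e^s)$ of the MacMahon function $M(z)=\prod_{j\ge1}(1-z^j)^{-j}$, the generating function of plane partitions. $F^{(m)}$ is the $m$-th derivative. $\alpha(s)\sim\beta(s)$ means $\alpha(s)/\beta(s)\to1$. $\zeta$ is the Riemann zeta function and $\Gamma$ the Gamma function. *)

theory Defs
  imports "HOL-Analysis.Analysis" "HOL-Library.Landau_Symbols"
begin

definition zeta3 :: real where
  "zeta3 = (\<Sum>n. 1 / (real (Suc n)) ^ 3)"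

definition macmahon_fulcrum :: "real \<Rightarrow> real" where
  "macmahon_fulcrum s = - (\<Sum>j. real (Suc j) * ln (1 - exp (s * real (Suc j))))"

end

theory Submission
  imports Defs "HOL-Real_Asymp.Real_Asymp"
begin

(* Write polylog_exp q v = sum_{n>=1} n^q e^{nv}, i.e. Li_{-q}(e^v); its v-derivative is
   polylog_exp (q + 1) v. Expanding -ln(1 - y) = sum_{l>=1} y^l / l and swapping the nonnegative
   double series gives F(u) = sum_{l>=1} l^{-1} polylog_exp 1 (l u), and termwise differentiation
   gives F^(m)(u) = sum_{l>=1} l^{m-1} polylog_exp (m + 1) (l u).
   Comparing n^q with the coefficients (n + 1) ... (n + q) of the negative binomial series
   q! / (1 - x)^{q+1} squeezes t^{q+1} polylog_exp q (-t) between two functions tending to q! as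
   t -> 0+, and bounds it uniformly by q! (q + 1)^{q+1}. Hence
   s^{m+2} F^(m)(-s) = sum_{l>=1} l^{-3} (l s)^{m+2} polylog_exp (m + 1) (-l s) tends to
   (m + 1)! zeta(3) = Gamma(m + 2) zeta(3) by Tannery's theorem. *)

lemma pochhammer_ge_power:
  fixes a :: "'a :: linordered_semidom"
  assumes "0 \<le> a"
  shows "a ^ n \<le> pochhammer a n"
proof (induction n)
  case (Suc n)
  have "a ^ Suc n = a ^ n * a" by (simp add: mult.commute)
  also have "\<dots> \<le> pochhammer a n * (a + of_nat n)"
    using Suc assms order_trans[OF zero_le_power Suc.IH] by (intro mult_mono) auto
  finally show ?case by (simp add: pochhammer_Suc)
qed simp

lemma pochhammer_le_power:
  fixes a :: "'a :: linordered_semidom"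
  assumes "0 \<le> a"
  shows "pochhammer a n \<le> (a + of_nat n) ^ n"
proof (induction n)
  case (Suc n)
  have "pochhammer a n \<le> (a + of_nat (Suc n)) ^ n"
    using Suc by (rule order_trans) (intro power_mono, use assms in auto)
  then have "pochhammer a n * (a + of_nat n) \<le> (a + of_nat (Suc n)) ^ n * (a + of_nat (Suc n))"
    using assms order_trans[OF zero_le_power pochhammer_ge_power]
    by (intro mult_mono) auto
  then show ?case by (simp add: pochhammer_Suc mult.commute)
qed simp

lemma fact_mult_pochhammer_swap:
  "fact p * pochhammer (real p + 1) i = fact i * pochhammer (real i + 1) p"
  using pochhammer_product'[of "1::real" p i] pochhammer_product'[of "1::real" i p]
  by (simp add: pochhammer_fact add.commute)

lemma negative_binomial_series:
  fixes x :: real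
  assumes "\<bar>x\<bar> < 1"
  shows "(\<lambda>i. pochhammer (real i + 1) p * x ^ i) sums (fact p / (1 - x) ^ (p + 1))"
proof -
  have coeff: "fact p * (((- (real p + 1)) gchoose i) * (- x) ^ i)
                = pochhammer (real i + 1) p * x ^ i" for i
  proof -
    have "fact p * (((- (real p + 1)) gchoose i) * (- x) ^ i)
            = fact p * pochhammer (real p + 1) i / fact i * x ^ i"
      by (simp add: gbinomial_pochhammer power_mult_distrib[symmetric] add.commute)
    then show ?thesis
      by (simp add: fact_mult_pochhammer_swap)
  qed
  have "(1 + - x) powr (real p + 1) = (1 - x) ^ (p + 1)"
    using assms powr_realpow[of "1 - x" "p + 1"] by (simp add: add.commute)
  then have sum: "fact p * (1 + - x) powr (- (real p + 1)) = fact p / (1 - x) ^ (p + 1)"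
    by (simp only: powr_minus divide_inverse)
  have "(\<lambda>i. fact p * (((- (real p + 1)) gchoose i) * (- x) ^ i))
          sums (fact p * (1 + - x) powr (- (real p + 1)))"
    using assms by (intro sums_mult gen_binomial_real) simp
  then show ?thesis
    by (simp only: coeff sum)
qed

lemma sums_minus_ln_one_minus:
  fixes y :: real
  assumes "\<bar>y\<bar> < 1"
  shows "(\<lambda>l. y ^ l / real l) sums (- ln (1 - y))"
  using sums_minus[OF ln_series'[of "- y"]] assms by simp

lemma one_plus_power_le_exp:
  fixes t :: real
  assumes "-1 \<le> t" "0 < n"
  shows "(1 + t) ^ n \<le> real n ^ n * exp t"
proof -
  have "1 + t \<le> real n * (1 + t / real n)"
    using assms by (simp add: field_simps)
  also have "\<dots> \<le> real n * exp (t / real n)"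
    by (intro mult_left_mono exp_ge_add_one_self) simp
  finally have "(1 + t) ^ n \<le> (real n * exp (t / real n)) ^ n"
    using assms by (intro power_mono) auto
  also have "\<dots> = real n ^ n * exp t"
    using assms by (simp add: power_mult_distrib flip: exp_of_nat_mult)
  finally show ?thesis .
qed

lemma divide_one_minus_exp_neg_le:
  fixes t :: real
  assumes "0 < t"
  shows "t / (1 - exp (- t)) \<le> 1 + t"
proof -
  have "(1 + t) * exp (- t) \<le> exp t * exp (- t)"
    by (intro mult_right_mono exp_ge_add_one_self) simp
  then have "t \<le> (1 + t) * (1 - exp (- t))"
    by (simp add: algebra_simps exp_minus)
  then show ?thesis
    using assms by (simp add: pos_divide_le_eq)
qed

lemma has_field_derivative_suminf_dominated:
  fixes f f' :: "nat \<Rightarrow> 'a :: {real_normed_field, banach} \<Rightarrow> 'a"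
  assumes "convex S" "x \<in> interior S"
    and "\<And>n y. y \<in> S \<Longrightarrow> (f n has_field_derivative f' n y) (at y within S)"
    and "\<And>n y. y \<in> S \<Longrightarrow> norm (f' n y) \<le> M n" "summable M"
    and "summable (\<lambda>n. f n x)"
  shows "((\<lambda>y. \<Sum>n. f n y) has_field_derivative (\<Sum>n. f' n x)) (at x)"
proof (rule has_field_derivative_series'(2)[OF assms(1,3)])
  show "uniformly_convergent_on S (\<lambda>n y. \<Sum>i<n. f' i y)"
    using assms(4,5) by (rule Weierstrass_m_test')
  show "x \<in> S"
    using assms(2) interior_subset by blast
qed (use assms(2,6) in auto)

lemma sums_swap_nonneg:
  fixes a :: "nat \<Rightarrow> nat \<Rightarrow> real"
  assumes nonneg: "\<And>l n. 0 \<le> a l n"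
    and rows: "\<And>l. (\<lambda>n. a l n) sums g l" and "summable g"
    and columns: "\<And>n. (\<lambda>l. a l n) sums h n"
  shows "h sums suminf g"
proof -
  have rows': "((\<lambda>n. a l n) has_sum g l) UNIV" for l
    using rows nonneg by (rule sums_nonneg_imp_has_sum)
  have "0 \<le> g l" for l
    using rows' nonneg by (rule has_sum_nonneg)
  then have "(g has_sum suminf g) UNIV"
    using \<open>summable g\<close> by (intro sums_nonneg_imp_has_sum) (auto simp: summable_sums)
  moreover have "(\<lambda>(l, n). a l n) summable_on UNIV \<times> UNIV"
    using rows' \<open>(g has_sum suminf g) UNIV\<close> nonneg
    by (intro summable_on_SigmaI[where g = g]) (auto simp: summable_on_def)
  ultimately have "((\<lambda>(l, n). a l n) has_sum suminf g) (UNIV \<times> UNIV)"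
    using rows' by (intro has_sum_SigmaI[where g = g]) auto
  then have "((\<lambda>(n, l). a l n) has_sum suminf g) (UNIV \<times> UNIV)"
    by (subst (asm) has_sum_swap) (simp add: case_prod_unfold)
  then have "(h has_sum suminf g) UNIV"
    by (rule has_sum_SigmaD) (simp add: sums_nonneg_imp_has_sum[OF columns nonneg])
  then show ?thesis
    by (rule has_sum_imp_sums)
qed

definition polylog_exp :: "nat \<Rightarrow> real \<Rightarrow> real" where
  "polylog_exp q v = (\<Sum>n. real (Suc n) ^ q * exp v ^ Suc n)"

lemma polylog_exp_term_le:
  fixes x :: real
  assumes "0 \<le> x"
  shows "real (Suc n) ^ q * x ^ Suc n \<le> x * (pochhammer (real n + 1) q * x ^ n)"
proof -
  have "(real n + 1) ^ q \<le> pochhammer (real n + 1) q"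
    by (rule pochhammer_ge_power) simp
  then have "x * ((real n + 1) ^ q * x ^ n) \<le> x * (pochhammer (real n + 1) q * x ^ n)"
    using assms by (intro mult_left_mono mult_right_mono) simp_all
  then show ?thesis
    by (simp add: mult_ac add.commute)
qed

lemma summable_polylog_exp:
  assumes "v < 0"
  shows "summable (\<lambda>n. real (Suc n) ^ q * exp v ^ Suc n)"
proof (rule summable_comparison_test)
  show "summable (\<lambda>n. exp v * (pochhammer (real n + 1) q * exp v ^ n))"
    using assms by (intro summable_mult sums_summable[OF negative_binomial_series]) simp
  show "\<exists>N. \<forall>n\<ge>N. norm (real (Suc n) ^ q * exp v ^ Suc n)
                     \<le> exp v * (pochhammer (real n + 1) q * exp v ^ n)"
    using polylog_exp_term_le[of "exp v"] by auto
qed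

lemma polylog_exp_nonneg: "v < 0 \<Longrightarrow> 0 \<le> polylog_exp q v"
  unfolding polylog_exp_def by (intro suminf_nonneg summable_polylog_exp) auto

lemma polylog_exp_le:
  assumes "v < 0"
  shows "polylog_exp q v \<le> fact q * exp v / (1 - exp v) ^ (q + 1)"
proof -
  have series: "(\<lambda>n. exp v * (pochhammer (real n + 1) q * exp v ^ n))
                  sums (exp v * (fact q / (1 - exp v) ^ (q + 1)))"
    using assms by (intro sums_mult negative_binomial_series) simp
  have "polylog_exp q v \<le> (\<Sum>n. exp v * (pochhammer (real n + 1) q * exp v ^ n))"
    unfolding polylog_exp_def
    by (intro suminf_le polylog_exp_term_le summable_polylog_exp[OF assms] sums_summable[OF series])
       simp
  then show ?thesis
    using sums_unique[OF series] by (simp add: mult.commute)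
qed

lemma polylog_exp_ge:
  assumes "v < 0"
  shows "fact q * exp v ^ (q + 1) / (1 - exp v) ^ (q + 1) \<le> polylog_exp q v"
proof -
  define f where "f n = real (Suc n) ^ q * exp v ^ Suc n" for n
  have f: "summable f" "\<And>n. 0 \<le> f n"
    unfolding f_def by (rule summable_polylog_exp[OF assms]) simp
  have lower: "exp v ^ (q + 1) * (pochhammer (real i + 1) q * exp v ^ i) \<le> f (i + q)" for i
  proof -
    have "pochhammer (real i + 1) q \<le> real (Suc (i + q)) ^ q"
      using pochhammer_le_power[of "real i + 1" q] by (simp add: add_ac)
    then show ?thesis
      by (simp add: f_def mult_right_mono power_add mult_ac)
  qed
  have series: "(\<lambda>i. exp v ^ (q + 1) * (pochhammer (real i + 1) q * exp v ^ i))
                  sums (exp v ^ (q + 1) * (fact q / (1 - exp v) ^ (q + 1)))"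
    using assms by (intro sums_mult negative_binomial_series) simp
  have "fact q * exp v ^ (q + 1) / (1 - exp v) ^ (q + 1)
          = (\<Sum>i. exp v ^ (q + 1) * (pochhammer (real i + 1) q * exp v ^ i))"
    using sums_unique[OF series] by (simp add: mult.commute)
  also have "\<dots> \<le> (\<Sum>i. f (i + q))"
    by (intro suminf_le lower sums_summable[OF series] summable_ignore_initial_segment f(1))
  also have "\<dots> \<le> suminf f"
    using suminf_split_initial_segment[OF f(1), of q] f(2) by (simp add: sum_nonneg)
  also have "\<dots> = polylog_exp q v"
    by (simp only: polylog_exp_def f_def[abs_def])
  finally show ?thesis .
qed

lemma polylog_exp_le_geometric:
  assumes "v \<le> b" "b < 0" "0 < k"
  shows "polylog_exp q (v * real k) \<le> fact q / (1 - exp b) ^ (q + 1) * exp b ^ k"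
proof -
  have vk: "v * real k \<le> b * real k"
    using assms by (simp add: mult_right_mono)
  have bk: "b * real k \<le> b"
    using assms by (simp add: mult_le_cancel_left1)
  have exp_le: "exp (v * real k) \<le> exp b ^ k"
    using vk by (simp add: mult.commute flip: exp_of_nat_mult)
  have "v * real k \<le> b"
    using vk bk by linarith
  then have "polylog_exp q (v * real k)
               \<le> fact q * exp (v * real k) / (1 - exp (v * real k)) ^ (q + 1)"
    using assms by (intro polylog_exp_le) simp
  also have "\<dots> \<le> fact q * exp b ^ k / (1 - exp b) ^ (q + 1)"
    using exp_le \<open>v * real k \<le> b\<close> assms by (intro frac_le mult_left_mono power_mono) simp_all
  finally show ?thesis
    by simp
qed

lemma polylog_exp_has_field_derivative:
  assumes "v < 0"
  shows "(polylog_exp q has_field_derivative polylog_exp (Suc q) v) (at v)"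
proof -
  let ?S = "{2 * v .. v / 2}"
  have "((\<lambda>w. \<Sum>n. real (Suc n) ^ q * exp w ^ Suc n) has_field_derivative
          (\<Sum>n. real (Suc n) ^ Suc q * exp v ^ Suc n)) (at v)"
  proof (rule has_field_derivative_suminf_dominated)
    show "v \<in> interior ?S"
      using assms by simp
    show "((\<lambda>w. real (Suc n) ^ q * exp w ^ Suc n) has_field_derivative
             real (Suc n) ^ Suc q * exp w ^ Suc n) (at w within ?S)" for n w
    proof -
      have "((\<lambda>w. exp w ^ Suc n) has_field_derivative (1 + real n) * (exp w * exp w ^ n)) (at w)"
        by (intro DERIV_power_Suc DERIV_exp)
      moreover have "real (Suc n) ^ q * ((1 + real n) * (exp w * exp w ^ n))
                       = real (Suc n) ^ Suc q * exp w ^ Suc n"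
        by simp
      ultimately show ?thesis
        by (metis DERIV_cmult has_field_derivative_at_within)
    qed
    show "norm (real (Suc n) ^ Suc q * exp w ^ Suc n)
            \<le> real (Suc n) ^ Suc q * exp (v / 2) ^ Suc n" if "w \<in> ?S" for n w
    proof -
      have "exp w ^ Suc n \<le> exp (v / 2) ^ Suc n"
        using that by (intro power_mono) auto
      then show ?thesis
        by (simp add: abs_mult mult_left_mono)
    qed
    show "summable (\<lambda>n. real (Suc n) ^ Suc q * exp (v / 2) ^ Suc n)"
      using assms by (intro summable_polylog_exp) simp
    show "summable (\<lambda>n. real (Suc n) ^ q * exp v ^ Suc n)"
      using assms by (rule summable_polylog_exp)
  qed simp
  then show ?thesis
    unfolding polylog_exp_def[abs_def] .
qed

lemma polylog_exp_scaled_le: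
  assumes "0 < t"
  shows "t ^ (q + 1) * polylog_exp q (- t) \<le> fact q * exp (- t) * (t / (1 - exp (- t))) ^ (q + 1)"
proof -
  have "t ^ (q + 1) * polylog_exp q (- t)
          \<le> t ^ (q + 1) * (fact q * exp (- t) / (1 - exp (- t)) ^ (q + 1))"
    using assms polylog_exp_le[of "- t" q] by (intro mult_left_mono) simp_all
  also have "\<dots> = fact q * exp (- t) * (t / (1 - exp (- t))) ^ (q + 1)"
    by (simp add: power_divide)
  finally show ?thesis .
qed

lemma polylog_exp_scaled_ge:
  assumes "0 < t"
  shows "fact q * (exp (- t) * (t / (1 - exp (- t)))) ^ (q + 1) \<le> t ^ (q + 1) * polylog_exp q (- t)"
proof -
  have "fact q * (exp (- t) * (t / (1 - exp (- t)))) ^ (q + 1)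
          = t ^ (q + 1) * (fact q * exp (- t) ^ (q + 1) / (1 - exp (- t)) ^ (q + 1))"
    by (simp add: power_mult_distrib power_divide mult_ac)
  also have "\<dots> \<le> t ^ (q + 1) * polylog_exp q (- t)"
    using assms polylog_exp_ge[of "- t" q] by (intro mult_left_mono) simp_all
  finally show ?thesis .
qed

lemma polylog_exp_scaled_bound:
  assumes "0 < t"
  shows "\<bar>t ^ (q + 1) * polylog_exp q (- t)\<bar> \<le> fact q * real (q + 1) ^ (q + 1)"
proof -
  have "\<bar>t ^ (q + 1) * polylog_exp q (- t)\<bar> = t ^ (q + 1) * polylog_exp q (- t)"
    using assms polylog_exp_nonneg[of "- t" q] by simp
  also have "\<dots> \<le> fact q * exp (- t) * (t / (1 - exp (- t))) ^ (q + 1)"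
    using assms by (rule polylog_exp_scaled_le)
  also have "\<dots> \<le> fact q * exp (- t) * (1 + t) ^ (q + 1)"
    using assms divide_one_minus_exp_neg_le[OF assms]
    by (intro mult_left_mono power_mono) simp_all
  also have "\<dots> \<le> fact q * exp (- t) * (real (q + 1) ^ (q + 1) * exp t)"
    using assms one_plus_power_le_exp[of t "q + 1"] by (intro mult_left_mono) simp_all
  also have "\<dots> = fact q * real (q + 1) ^ (q + 1)"
    by (simp add: exp_minus field_simps)
  finally show ?thesis .
qed

lemma polylog_exp_scaled_tendsto:
  "((\<lambda>t. t ^ (q + 1) * polylog_exp q (- t)) \<longlongrightarrow> fact q) (at_right 0)"
proof (rule tendsto_sandwich)
  have limits: "((\<lambda>t::real. exp (- t)) \<longlongrightarrow> 1) (at_right 0)"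
    "((\<lambda>t::real. t / (1 - exp (- t))) \<longlongrightarrow> 1) (at_right 0)"
    "((\<lambda>t::real. exp (- t) * (t / (1 - exp (- t)))) \<longlongrightarrow> 1) (at_right 0)"
    by real_asymp+
  show "((\<lambda>t::real. fact q * (exp (- t) * (t / (1 - exp (- t)))) ^ (q + 1)) \<longlongrightarrow> fact q) (at_right 0)"
    using tendsto_mult[OF tendsto_const[of "fact q"] tendsto_power[OF limits(3), of "q + 1"]]
    by (simp only: mult_1_right power_one)
  show "((\<lambda>t::real. fact q * exp (- t) * (t / (1 - exp (- t))) ^ (q + 1)) \<longlongrightarrow> fact q) (at_right 0)"
    using tendsto_mult[OF tendsto_mult[OF tendsto_const[of "fact q"] limits(1)]
                          tendsto_power[OF limits(2), of "q + 1"]]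
    by (simp only: mult_1_right power_one)
  show "eventually (\<lambda>t. fact q * (exp (- t) * (t / (1 - exp (- t)))) ^ (q + 1)
                          \<le> t ^ (q + 1) * polylog_exp q (- t)) (at_right 0)"
    using eventually_at_right_less by (rule eventually_mono) (rule polylog_exp_scaled_ge)
  show "eventually (\<lambda>t. t ^ (q + 1) * polylog_exp q (- t)
                          \<le> fact q * exp (- t) * (t / (1 - exp (- t))) ^ (q + 1)) (at_right 0)"
    using eventually_at_right_less by (rule eventually_mono) (rule polylog_exp_scaled_le)
qed

(* k^m / k stands for k^(m - 1), which would be truncated at m = 0. *)
definition fulcrum_series :: "nat \<Rightarrow> real \<Rightarrow> real" where
  "fulcrum_series m u =
     (\<Sum>k. real (Suc k) ^ m / real (Suc k) * polylog_exp (Suc m) (u * real (Suc k)))"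

lemma fulcrum_series_term_bound:
  assumes "u \<le> b" "b < 0"
  shows "\<bar>real (Suc k) ^ m / real (Suc k) * polylog_exp p (u * real (Suc k))\<bar>
           \<le> fact p / (1 - exp b) ^ (p + 1) * (real (Suc k) ^ m * exp b ^ Suc k)"
proof -
  have nonneg: "0 \<le> polylog_exp p (u * real (Suc k))"
    using assms by (intro polylog_exp_nonneg) (simp add: mult_neg_pos)
  have "real (Suc k) ^ m / real (Suc k) \<le> real (Suc k) ^ m"
    using divide_left_mono[of 1 "real (Suc k)" "real (Suc k) ^ m"] by simp
  then have "real (Suc k) ^ m / real (Suc k) * polylog_exp p (u * real (Suc k))
               \<le> real (Suc k) ^ m * polylog_exp p (u * real (Suc k))"
    using nonneg by (rule mult_right_mono)
  with nonneg have "\<bar>real (Suc k) ^ m / real (Suc k) * polylog_exp p (u * real (Suc k))\<bar>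
                      \<le> real (Suc k) ^ m * polylog_exp p (u * real (Suc k))"
    by simp
  also have "\<dots> \<le> real (Suc k) ^ m * (fact p / (1 - exp b) ^ (p + 1) * exp b ^ Suc k)"
    using assms by (intro mult_left_mono polylog_exp_le_geometric) simp_all
  finally show ?thesis
    by (simp add: mult_ac)
qed

lemma summable_fulcrum_series:
  assumes "u < 0"
  shows "summable (\<lambda>k. real (Suc k) ^ m / real (Suc k) * polylog_exp p (u * real (Suc k)))"
proof (rule summable_comparison_test')
  show "summable (\<lambda>k. fact p / (1 - exp u) ^ (p + 1) * (real (Suc k) ^ m * exp u ^ Suc k))"
    using assms by (intro summable_mult summable_polylog_exp)
  show "norm (real (Suc k) ^ m / real (Suc k) * polylog_exp p (u * real (Suc k)))
          \<le> fact p / (1 - exp u) ^ (p + 1) * (real (Suc k) ^ m * exp u ^ Suc k)" for k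
    using assms by (simp only: real_norm_def fulcrum_series_term_bound)
qed

lemma fulcrum_series_has_field_derivative:
  assumes "u < 0"
  shows "(fulcrum_series m has_field_derivative fulcrum_series (Suc m) u) (at u)"
proof -
  let ?S = "{2 * u .. u / 2}"
  let ?f = "\<lambda>p k w. real (Suc k) ^ p / real (Suc k) * polylog_exp (Suc p) (w * real (Suc k))"
  have "((\<lambda>w. \<Sum>k. ?f m k w) has_field_derivative (\<Sum>k. ?f (Suc m) k u)) (at u)"
  proof (rule has_field_derivative_suminf_dominated)
    show "u \<in> interior ?S"
      using assms by simp
    show "(?f m k has_field_derivative ?f (Suc m) k w) (at w within ?S)" if "w \<in> ?S" for k w
    proof -
      have "w * real (Suc k) < 0"
        using that assms by (simp add: mult_neg_pos)
      moreover have "((\<lambda>w. w * real (Suc k)) has_field_derivative real (Suc k)) (at w)"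
        by (auto intro!: derivative_eq_intros)
      ultimately have "((\<lambda>w. polylog_exp (Suc m) (w * real (Suc k))) has_field_derivative
              polylog_exp (Suc (Suc m)) (w * real (Suc k)) * real (Suc k)) (at w)"
        by (rule DERIV_chain2[OF polylog_exp_has_field_derivative])
      moreover have "real (Suc k) ^ m / real (Suc k) *
                       (polylog_exp (Suc (Suc m)) (w * real (Suc k)) * real (Suc k)) = ?f (Suc m) k w"
        by simp
      ultimately show ?thesis
        by (metis DERIV_cmult has_field_derivative_at_within)
    qed
    show "norm (?f (Suc m) k w) \<le> fact (Suc (Suc m)) / (1 - exp (u / 2)) ^ (Suc (Suc m) + 1)
            * (real (Suc k) ^ Suc m * exp (u / 2) ^ Suc k)" if "w \<in> ?S" for k w
      unfolding real_norm_def by (rule fulcrum_series_term_bound) (use that assms in auto)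
    show "summable (\<lambda>k. fact (Suc (Suc m)) / (1 - exp (u / 2)) ^ (Suc (Suc m) + 1)
            * (real (Suc k) ^ Suc m * exp (u / 2) ^ Suc k))"
      using assms by (intro summable_mult summable_polylog_exp) simp
    show "summable (\<lambda>k. ?f m k u)"
      using assms by (rule summable_fulcrum_series)
  qed simp
  then show ?thesis
    unfolding fulcrum_series_def[abs_def] .
qed

lemma macmahon_fulcrum_eq_fulcrum_series:
  assumes "u < 0"
  shows "macmahon_fulcrum u = fulcrum_series 0 u"
proof -
  define x where "x = exp u"
  have x: "0 < x" "x < 1"
    using assms by (simp_all add: x_def)
  \<comment> \<open>the row l = 0 vanishes because of division by zero\<close>
  define a where "a l n = real (Suc n) * (x ^ Suc n) ^ l / real l" for l n
  define g where "g l = polylog_exp 1 (u * real l) / real l" for l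
  define h where "h n = - (real (Suc n) * ln (1 - x ^ Suc n))" for n
  have rows: "(\<lambda>n. a l n) sums g l" for l
  proof (cases "l = 0")
    case False
    have "exp (u * real l) ^ Suc n = (x ^ Suc n) ^ l" for n
      by (simp only: x_def exp_of_nat_mult[symmetric]) (simp add: mult_ac)
    moreover have "(\<lambda>n. real (Suc n) ^ 1 * exp (u * real l) ^ Suc n / real l) sums g l"
      unfolding g_def polylog_exp_def
      using False assms
      by (intro sums_divide summable_sums summable_polylog_exp) (simp add: mult_neg_pos)
    ultimately show ?thesis
      by (simp add: a_def)
  qed (simp add: a_def g_def)
  have "summable (\<lambda>l. g (Suc l))"
    using summable_fulcrum_series[OF assms, of 0 1] by (simp add: g_def)
  then have "summable g"
    by (subst (asm) summable_Suc_iff)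
  moreover have columns: "(\<lambda>l. a l n) sums h n" for n
    using sums_mult[OF sums_minus_ln_one_minus[of "x ^ Suc n"], of "real (Suc n)"]
          x power_Suc_less_one[of x n]
    by (simp add: a_def h_def)
  ultimately have "h sums suminf g"
    using x by (intro sums_swap_nonneg[OF _ rows]) (simp add: a_def)
  moreover have "suminf g = fulcrum_series 0 u"
    using suminf_split_head[OF \<open>summable g\<close>] by (simp add: fulcrum_series_def g_def)
  moreover have "macmahon_fulcrum u = suminf h"
  proof -
    have "x ^ Suc j = exp (u * real (Suc j))" for j
      unfolding x_def exp_of_nat_mult[symmetric] by (simp only: mult.commute)
    then have "macmahon_fulcrum u = - (\<Sum>j. - h j)"
      by (simp only: macmahon_fulcrum_def h_def minus_minus)
    also have "\<dots> = suminf h"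
      using sums_summable[OF \<open>h sums suminf g\<close>] by (simp add: suminf_minus)
    finally show ?thesis .
  qed
  ultimately show ?thesis
    by (simp add: sums_iff)
qed

lemma higher_deriv_macmahon_fulcrum:
  "u < 0 \<Longrightarrow> (deriv ^^ m) macmahon_fulcrum u = fulcrum_series m u"
proof (induction m arbitrary: u)
  case 0
  then show ?case
    by (simp add: macmahon_fulcrum_eq_fulcrum_series)
next
  case (Suc m)
  have "eventually (\<lambda>w. w < 0) (nhds u)"
    using eventually_nhds_in_open[of "{..<0}" u] Suc.prems by simp
  then have "eventually (\<lambda>w. (deriv ^^ m) macmahon_fulcrum w = fulcrum_series m w) (nhds u)"
    by eventually_elim (rule Suc.IH)
  then have "deriv ((deriv ^^ m) macmahon_fulcrum) u = deriv (fulcrum_series m) u"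
    by (rule deriv_cong_ev) simp
  also have "\<dots> = fulcrum_series (Suc m) u"
    by (rule DERIV_imp_deriv[OF fulcrum_series_has_field_derivative[OF Suc.prems]])
  finally show ?case
    by simp
qed

lemma summable_inverse_Suc_cube: "summable (\<lambda>k. 1 / real (Suc k) ^ 3)"
proof -
  have "summable (\<lambda>k. inverse (real k ^ 3))"
    by (rule inverse_power_summable) simp
  then have "summable (\<lambda>k. inverse (real (Suc k) ^ 3))"
    by (subst summable_Suc_iff)
  then show ?thesis
    by (simp add: inverse_eq_divide)
qed

lemma zeta3_pos: "0 < zeta3"
  unfolding zeta3_def by (rule suminf_pos[OF summable_inverse_Suc_cube]) simp

lemma fulcrum_series_scaled_eq:
  assumes "0 < s"
  shows "s ^ (m + 2) * fulcrum_series m (- s)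
           = (\<Sum>k. (s * real (Suc k)) ^ (m + 2) * polylog_exp (Suc m) (- (s * real (Suc k)))
                      / real (Suc k) ^ 3)"
proof -
  have scale: "(s * K) ^ (m + 2) * P / K ^ 3 = s ^ (m + 2) * (K ^ m / K * P)"
    if "0 < K" for K P :: real
    using that by (simp add: field_simps power_add eval_nat_numeral)
  have "s ^ (m + 2) * fulcrum_series m (- s)
          = (\<Sum>k. s ^ (m + 2) * (real (Suc k) ^ m / real (Suc k)
                                    * polylog_exp (Suc m) (- s * real (Suc k))))"
    unfolding fulcrum_series_def using assms
    by (intro suminf_mult[symmetric] summable_fulcrum_series) simp
  also have "\<dots> = (\<Sum>k. (s * real (Suc k)) ^ (m + 2) * polylog_exp (Suc m) (- (s * real (Suc k)))
                          / real (Suc k) ^ 3)"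
    unfolding mult_minus_left by (subst scale) simp_all
  finally show ?thesis .
qed

lemma fulcrum_series_scaled_tendsto:
  "((\<lambda>s. s ^ (m + 2) * fulcrum_series m (- s)) \<longlongrightarrow> fact (Suc m) * zeta3) (at_right 0)"
proof -
  define a where "a k s = (s * real (Suc k)) ^ (m + 2) * polylog_exp (Suc m) (- (s * real (Suc k)))
                            / real (Suc k) ^ 3" for k s
  define M where "M k = fact (Suc m) * real (m + 2) ^ (m + 2) * (1 / real (Suc k) ^ 3)" for k
  have "((\<lambda>s. a k s) \<longlongrightarrow> fact (Suc m) / real (Suc k) ^ 3) (at_right 0)" for k
  proof -
    have "filterlim (\<lambda>s::real. s * real (Suc k)) (at_right 0) (at_right 0)"
    proof (rule tendsto_imp_filterlim_at_right)
      show "((\<lambda>s::real. s * real (Suc k)) \<longlongrightarrow> 0) (at_right 0)"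
        by (auto intro!: tendsto_eq_intros)
      show "eventually (\<lambda>s::real. 0 < s * real (Suc k)) (at_right 0)"
        using eventually_at_right_less by (rule eventually_mono) simp
    qed
    from filterlim_compose[OF polylog_exp_scaled_tendsto[of "Suc m"] this]
    have "((\<lambda>s. (s * real (Suc k)) ^ (m + 2) * polylog_exp (Suc m) (- (s * real (Suc k))))
            \<longlongrightarrow> fact (Suc m)) (at_right 0)"
      by simp
    then show ?thesis
      unfolding a_def by (rule tendsto_divide) simp_all
  qed
  moreover have "eventually (\<lambda>(k, s). norm (a k s) \<le> M k) (at_top \<times>\<^sub>F at_right (0::real))"
    unfolding eventually_prod_filter
  proof (intro exI conjI allI impI)
    show "eventually (\<lambda>_. True) at_top"
      by simp
    show "eventually (\<lambda>s::real. 0 < s) (at_right 0)"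
      by (rule eventually_at_right_less)
    show "case (k, s) of (k, s) \<Rightarrow> norm (a k s) \<le> M k" if "0 < s" for k and s :: real
      using polylog_exp_scaled_bound[of "s * real (Suc k)" "Suc m"] that
      by (simp add: a_def M_def divide_right_mono)
  qed
  moreover have "summable M"
    unfolding M_def by (intro summable_mult summable_inverse_Suc_cube)
  ultimately have "((\<lambda>s. \<Sum>k. a k s) \<longlongrightarrow> (\<Sum>k. fact (Suc m) / real (Suc k) ^ 3)) (at_right 0)"
    by (intro conjunct2[OF conjunct2[OF tannerys_theorem]]) auto
  also have "(\<Sum>k. fact (Suc m) / real (Suc k) ^ 3) = fact (Suc m) * zeta3"
    unfolding zeta3_def using suminf_mult[OF summable_inverse_Suc_cube, of "fact (Suc m)"] by simp
  finally have "((\<lambda>s. \<Sum>k. a k s) \<longlongrightarrow> fact (Suc m) * zeta3) (at_right 0)" .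
  moreover have "eventually (\<lambda>s. (\<Sum>k. a k s) = s ^ (m + 2) * fulcrum_series m (- s)) (at_right 0)"
    using eventually_at_right_less
    by (rule eventually_mono) (simp only: a_def fulcrum_series_scaled_eq)
  ultimately show ?thesis
    by (rule Lim_transform_eventually)
qed

theorem proposition4p3:
  fixes m :: nat
  shows "(\<lambda>s. (deriv ^^ m) macmahon_fulcrum (- s))
           \<sim>[at_right 0] (\<lambda>s. zeta3 * Gamma (real m + 2) / s ^ (m + 2))"
proof (rule asymp_equivI')
  have Gamma: "Gamma (real m + 2) = fact (Suc m)"
    using Gamma_fact[of "Suc m", where 'a = real] by (simp add: add.commute)
  have "((\<lambda>s. s ^ (m + 2) * fulcrum_series m (- s) / (fact (Suc m) * zeta3)) \<longlongrightarrow> 1) (at_right 0)"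
    using tendsto_divide[OF fulcrum_series_scaled_tendsto[of m] tendsto_const, of "fact (Suc m) * zeta3"]
          zeta3_pos
    by simp
  moreover have "eventually (\<lambda>s. s ^ (m + 2) * fulcrum_series m (- s) / (fact (Suc m) * zeta3)
           = (deriv ^^ m) macmahon_fulcrum (- s) / (zeta3 * Gamma (real m + 2) / s ^ (m + 2)))
          (at_right 0)"
    using eventually_at_right_less
    by eventually_elim (simp add: higher_deriv_macmahon_fulcrum Gamma field_simps)
  ultimately show "((\<lambda>s. (deriv ^^ m) macmahon_fulcrum (- s) / (zeta3 * Gamma (real m + 2) / s ^ (m + 2)))
                     \<longlongrightarrow> 1) (at_right 0)"
    by (rule Lim_transform_eventually)
qed

end
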